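(* Let $0<q<1$, $\sigma\in\mathbb{R}\setminus\{0\}$ and $\gamma>-1$, and let $J=J(\sigma,\gamma)$ be the Jacobi matrix operator in $\ell^2(\mathbb{N})$ with diagonal entries $\lambda_n=q^{n-1}$ and off-diagonal entries \[ w_n=\tfrac12\sinh(\sigma)\,q^{(n-\gamma-1)/2}\sqrt{1-q^{n+\gamma}},\quad n\in\mathbb{N}, \] i.e. $(Jx)_1=\lambda_1x_1+w_1x_2$, $(Jx)_n=w_{n-1}x_{n-1}+\lambda_nx_n+w_nx_{n+1}$ for $n\ge2$. Then $z\neq0$ is an eigenvalue of $J$ if and only if \[ \big(\cosh^2(\sigma/2)z^{-1};q\big)_\infty\,{}_1\phi_1\!\big(q^{-\gamma}\cosh^2(\sigma/2)z^{-1};\cosh^2(\sigma/2)z^{-1};q,-\sinh^2(\sigma/2)z^{-1}\big)=0. \] Moreover, if $z\neq0$ solves this equation then the sequence $\{v_n\}_{n=1}^\infty$, \[ v_n=q^{-\frac12\gamma n+\frac14n(n-3)}\frac{\sinh^n(\sigma)(2z)^{-n}}{\sqrt{(q^{\gamma+n};q)_\infty}}\big(q^n\cosh^2(\tfrac{\sigma}{2})z^{-1};q\big)_\infty\,{}_1\phi_1\!\Big(q^{-\gamma}\cosh^2(\tfrac{\sigma}{2})z^{-1};q^n\cosh^2(\tfrac{\sigma}{2})z^{-1};q,-q^n\sinh^2(\tfrac{\sigma}{2})z^{-1}\Big), \] is a corresponding eigenvector.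
   Context: $(a;q)_k=\prod_{j=0}^{k-1}(1-aq^j)$, $(a;q)_\infty=\lim_k(a;q)_k$, complex powers $q^s=e^{s\log q}$, and ${}_1\phi_1(a;b;q,z)=\sum_{k\ge0}(-1)^kq^{k(k-1)/2}\frac{(a;q)_k}{(b;q)_k(q;q)_k}z^k$. The matrix defines a bounded (compact) self-adjoint operator. *)

theory Defs
  imports "HOL-Analysis.Analysis"
begin

definition qpoch :: "complex \<Rightarrow> real \<Rightarrow> nat \<Rightarrow> complex" where
  "qpoch a q k = (\<Prod>j<k. 1 - a * complex_of_real q ^ j)"

definition qpoch_inf :: "complex \<Rightarrow> real \<Rightarrow> complex" where
  "qpoch_inf a q = lim (\<lambda>k. qpoch a q k)"

definition phi11 :: "complex \<Rightarrow> complex \<Rightarrow> real \<Rightarrow> complex \<Rightarrow> complex" where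
  "phi11 a b q z = (\<Sum>k. (-1) ^ k * complex_of_real q ^ (k * (k - 1) div 2)
        * qpoch a q k / (qpoch b q k * qpoch (complex_of_real q) q k) * z ^ k)"

text \<open>The product (b;q)_\<infinity> * 1phi1(a;b;q,z), written termwise using
  (b;q)_\<infinity> / (b;q)_k = (b q^k;q)_\<infinity>; this is the entire function of b that the
  product denotes (it agrees with qpoch_inf b q * phi11 a b q z whenever (b;q)_k \<noteq> 0 for all k).\<close>
definition qpoch_phi11 :: "complex \<Rightarrow> complex \<Rightarrow> real \<Rightarrow> complex \<Rightarrow> complex" where
  "qpoch_phi11 a b q z = (\<Sum>k. (-1) ^ k * complex_of_real q ^ (k * (k - 1) div 2)
        * qpoch a q k * qpoch_inf (b * complex_of_real q ^ k) q
        / qpoch (complex_of_real q) q k * z ^ k)"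

definition jac_diag :: "real \<Rightarrow> nat \<Rightarrow> real" where
  "jac_diag q n = q ^ (n - 1)"

definition jac_off :: "real \<Rightarrow> real \<Rightarrow> real \<Rightarrow> nat \<Rightarrow> real" where
  "jac_off q \<sigma> \<gamma> n = 1/2 * sinh \<sigma> * q powr ((real n - \<gamma> - 1) / 2) * sqrt (1 - q powr (real n + \<gamma>))"

text \<open>Action of J on a sequence x (components x 1, x 2, ...; x 0 unused).\<close>
definition jac_apply :: "real \<Rightarrow> real \<Rightarrow> real \<Rightarrow> (nat \<Rightarrow> complex) \<Rightarrow> nat \<Rightarrow> complex" where
  "jac_apply q \<sigma> \<gamma> x n =
     (if n = 1 then complex_of_real (jac_diag q 1) * x 1 + complex_of_real (jac_off q \<sigma> \<gamma> 1) * x 2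
      else complex_of_real (jac_off q \<sigma> \<gamma> (n - 1)) * x (n - 1) + complex_of_real (jac_diag q n) * x n
           + complex_of_real (jac_off q \<sigma> \<gamma> n) * x (n + 1))"

definition in_l2 :: "(nat \<Rightarrow> complex) \<Rightarrow> bool" where
  "in_l2 x \<longleftrightarrow> summable (\<lambda>n. (cmod (x (Suc n)))\<^sup>2)"

definition is_eigenvector :: "real \<Rightarrow> real \<Rightarrow> real \<Rightarrow> complex \<Rightarrow> (nat \<Rightarrow> complex) \<Rightarrow> bool" where
  "is_eigenvector q \<sigma> \<gamma> z x \<longleftrightarrow>
     in_l2 x \<and> (\<exists>n\<ge>1. x n \<noteq> 0) \<and> (\<forall>n\<ge>1. jac_apply q \<sigma> \<gamma> x n = z * x n)"

definition is_eigenvalue :: "real \<Rightarrow> real \<Rightarrow> real \<Rightarrow> complex \<Rightarrow> bool" where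
  "is_eigenvalue q \<sigma> \<gamma> z \<longleftrightarrow> (\<exists>x. is_eigenvector q \<sigma> \<gamma> z x)"

definition eigvec :: "real \<Rightarrow> real \<Rightarrow> real \<Rightarrow> complex \<Rightarrow> nat \<Rightarrow> complex" where
  "eigvec q \<sigma> \<gamma> z n =
     complex_of_real (q powr (- \<gamma> * real n / 2 + real n * (real n - 3) / 4))
     * complex_of_real (sinh \<sigma> ^ n) * inverse (2 * z) ^ n
     / complex_of_real (sqrt (Re (qpoch_inf (complex_of_real (q powr (\<gamma> + real n))) q)))
     * qpoch_phi11 (complex_of_real (q powr (- \<gamma>) * (cosh (\<sigma>/2))\<^sup>2) / z)
                   (complex_of_real (q ^ n * (cosh (\<sigma>/2))\<^sup>2) / z) q
                   (- complex_of_real (q ^ n * (sinh (\<sigma>/2))\<^sup>2) / z)"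

end

(*
  The candidate eigenvector is v n = \<kappa> n * \<phi> n, where \<phi> n = F (q^n) for
  F x = (b x; q)_\<infinity> 1\<phi>1(a; b x; q, -t x) with the parameters a, b, t of the theorem, and
  \<kappa> (n+1) / \<kappa> n = w n / z.  A contiguous relation of 1\<phi>1, obtained termwise by
  telescoping, gives z F x + (x - z) F (q x) + z t x (a - b q x) F (q^2 x) = 0; since
  (w (n+1))^2 = z^2 t q^n (a - b q^(n+1)), this makes v satisfy every row n \<ge> 2 of J v = z v,
  while row 1 holds iff \<phi> 0 = 0, i.e. iff the function in the theorem vanishes at z.
  As \<kappa> (n+1) / \<kappa> n \<rightarrow> 0 and \<phi> n \<rightarrow> 1 (Tannery's theorem), v is a nonzero
  element of l^2.  Conversely, for any eigenvector x the Wronskian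
  w n (x n v (n+1) - x (n+1) v n) does not depend on n and tends to 0, so x and v are
  proportional in their first two entries and v satisfies row 1 as well.
*)

theory Submission
  imports Defs "HOL-Real_Asymp.Real_Asymp"
begin

section \<open>q-Pochhammer symbols\<close>

lemma qpoch_Suc: "qpoch y q (Suc k) = (1 - y) * qpoch (y * complex_of_real q) q k"
  unfolding qpoch_def by (subst prod.lessThan_Suc_shift) (simp add: mult_ac)

lemma qpoch_Suc_last: "qpoch y q (Suc k) = qpoch y q k * (1 - y * complex_of_real q ^ k)"
  unfolding qpoch_def by simp

lemma qpoch_LIMSEQ:
  assumes "0 < q" "q < 1"
  shows "(\<lambda>k. qpoch y q k) \<longlonglongrightarrow> qpoch_inf y q"
proof -
  let ?f = "\<lambda>j. 1 - y * complex_of_real q ^ j"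
  have "summable (\<lambda>j. norm y * q ^ j)"
    using assms by (intro summable_mult summable_geometric) auto
  moreover have "norm (?f j - 1) = norm y * q ^ j" for j
    using assms by (simp add: norm_mult norm_power)
  ultimately have "convergent_prod ?f"
    by (intro abs_convergent_prod_imp_convergent_prod summable_imp_abs_convergent_prod) simp
  then have "(\<lambda>n. \<Prod>i<n. ?f i) \<longlonglongrightarrow> prodinf ?f"
    by (simp add: convergent_prod_LIMSEQ LIMSEQ_lessThan_iff_atMost)
  then have "convergent (\<lambda>k. qpoch y q k)"
    unfolding qpoch_def convergent_def by blast
  then show ?thesis
    unfolding qpoch_inf_def by (simp add: convergent_LIMSEQ_iff)
qed

lemma qpoch_inf_Suc:
  assumes "0 < q" "q < 1"
  shows "qpoch_inf y q = (1 - y) * qpoch_inf (y * complex_of_real q) q"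
proof (rule LIMSEQ_unique)
  show "(\<lambda>k. qpoch y q (Suc k)) \<longlonglongrightarrow> qpoch_inf y q"
    using qpoch_LIMSEQ[OF assms] by (rule LIMSEQ_Suc)
  show "(\<lambda>k. qpoch y q (Suc k)) \<longlonglongrightarrow> (1 - y) * qpoch_inf (y * complex_of_real q) q"
    unfolding qpoch_Suc by (intro tendsto_mult_left qpoch_LIMSEQ assms)
qed

lemma qpoch_inf_split:
  assumes "0 < q" "q < 1"
  shows "qpoch_inf y q = qpoch y q N * qpoch_inf (y * complex_of_real q ^ N) q"
proof (induction N arbitrary: y)
  case 0
  then show ?case by (simp add: qpoch_def)
next
  case (Suc N)
  have "qpoch_inf y q = (1 - y) * qpoch_inf (y * complex_of_real q) q"
    by (rule qpoch_inf_Suc[OF assms])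
  also have "qpoch_inf (y * complex_of_real q) q = qpoch (y * complex_of_real q) q N *
      qpoch_inf (y * complex_of_real q * complex_of_real q ^ N) q"
    by (rule Suc)
  finally show ?case by (simp add: qpoch_Suc mult_ac)
qed

lemma prod_one_plus_geometric_le_exp:
  fixes q r :: real
  assumes "0 < q" "q < 1" "0 \<le> r"
  shows "(\<Prod>j<k. 1 + r * q ^ j) \<le> exp (r / (1 - q))"
proof -
  have "(\<Prod>j<k. 1 + r * q ^ j) \<le> (\<Prod>j<k. exp (r * q ^ j))"
    using assms by (intro prod_mono) (simp add: exp_ge_add_one_self)
  also have "\<dots> = exp (r * (\<Sum>j<k. q ^ j))"
    by (simp add: exp_sum sum_distrib_left)
  also have "\<dots> \<le> exp (r * (1 / (1 - q)))"
  proof -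
    have "(\<Sum>j<k. q ^ j) \<le> 1 / (1 - q)"
      using assms by (simp add: sum_gp_strict divide_right_mono)
    from mult_left_mono[OF this assms(3)] show ?thesis
      by simp
  qed
  finally show ?thesis by simp
qed

lemma norm_qpoch_minus_1_le:
  assumes "0 < q" "q < 1"
  shows "norm (qpoch y q k - 1) \<le> exp (norm y / (1 - q)) - 1"
proof -
  have "norm (qpoch y q k - 1) \<le> (\<Prod>j<k. 1 + norm (- y * complex_of_real q ^ j)) - 1"
    using norm_prod_minus1_le_prod_minus1[of "\<lambda>j. - y * complex_of_real q ^ j" "{..<k}"]
    by (simp add: qpoch_def)
  also have "\<dots> \<le> exp (norm y / (1 - q)) - 1"
    using prod_one_plus_geometric_le_exp[OF assms, of "norm y" k] assms
    by (simp add: norm_mult norm_power)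
  finally show ?thesis .
qed

lemma norm_qpoch_inf_minus_1_le:
  assumes "0 < q" "q < 1"
  shows "norm (qpoch_inf y q - 1) \<le> exp (norm y / (1 - q)) - 1"
  by (rule LIMSEQ_le_const2[OF tendsto_norm[OF tendsto_diff[OF qpoch_LIMSEQ[OF assms] tendsto_const]]])
    (use norm_qpoch_minus_1_le[OF assms] in auto)

lemma norm_qpoch_inf_le:
  assumes "0 < q" "q < 1" "norm y \<le> r"
  shows "norm (qpoch_inf y q) \<le> exp (r / (1 - q))"
proof -
  have "norm (qpoch_inf y q) \<le> norm (qpoch_inf y q - 1) + 1"
    using norm_triangle_ineq2[of "qpoch_inf y q" 1] by simp
  also have "\<dots> \<le> exp (norm y / (1 - q))"
    using norm_qpoch_inf_minus_1_le[OF assms(1,2), of y] by simp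
  also have "\<dots> \<le> exp (r / (1 - q))"
    using assms by (simp add: divide_right_mono)
  finally show ?thesis .
qed

lemma qpoch_inf_tendsto_1:
  assumes "0 < q" "q < 1" "(f \<longlongrightarrow> 0) F"
  shows "((\<lambda>x. qpoch_inf (f x) q) \<longlongrightarrow> 1) F"
proof -
  have "((\<lambda>x. norm (f x) / (1 - q)) \<longlongrightarrow> 0) F"
    using tendsto_norm_zero[OF assms(3)] by (rule tendsto_divide_zero)
  from LIM_zero[OF tendsto_exp[OF this]]
  have "((\<lambda>x. exp (norm (f x) / (1 - q)) - 1) \<longlongrightarrow> 0) F"
    by simp
  then have "((\<lambda>x. qpoch_inf (f x) q - 1) \<longlongrightarrow> 0) F"
    by (rule Lim_null_comparison[OF always_eventually, rotated])
      (use norm_qpoch_inf_minus_1_le[OF assms(1,2)] in blast)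
  then show ?thesis
    by (simp add: LIM_zero_iff)
qed

lemma qpoch_inf_of_real_pos:
  assumes "0 < q" "q < 1" "0 \<le> y" "y < 1"
  shows "Re (qpoch_inf (complex_of_real y) q) > 0"
proof -
  let ?P = "qpoch_inf (complex_of_real y) q"
  have partial: "qpoch (complex_of_real y) q = (\<lambda>k. complex_of_real (\<Prod>j<k. 1 - y * q ^ j))"
    by (simp add: qpoch_def fun_eq_iff)
  have partial_pos: "(\<Prod>j<k. 1 - y * q ^ j) > 0" for k
  proof (intro prod_pos ballI)
    fix j
    have "y * q ^ j \<le> y" using assms by (simp add: mult_left_le power_le_one)
    then show "0 < 1 - y * q ^ j" using assms by simp
  qed
  have lim: "(\<lambda>k. qpoch (complex_of_real y) q k) \<longlonglongrightarrow> ?P"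
    by (rule qpoch_LIMSEQ[OF assms(1,2)])
  have "(\<lambda>k. 0) \<longlonglongrightarrow> Im ?P"
    using tendsto_Im[OF lim] by (simp only: partial Im_complex_of_real)
  then have "Im ?P = 0" by (simp add: LIMSEQ_const_iff)
  moreover have "Re ?P \<ge> 0"
    using tendsto_Re[OF lim] by (rule LIMSEQ_le_const)
      (use partial_pos in \<open>simp only: partial Re_complex_of_real less_imp_le, simp\<close>)
  moreover have "?P \<noteq> 0"
  proof -
    have "(\<lambda>N. complex_of_real y * complex_of_real q ^ N) \<longlonglongrightarrow> 0"
      using assms by (intro tendsto_mult_right_zero LIMSEQ_power_zero) auto
    from qpoch_inf_tendsto_1[OF assms(1,2) this]
    have "eventually (\<lambda>N. qpoch_inf (complex_of_real y * complex_of_real q ^ N) q \<noteq> 0) sequentially"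
      by (rule tendsto_imp_eventually_ne) simp
    then obtain N where "qpoch_inf (complex_of_real y * complex_of_real q ^ N) q \<noteq> 0"
      by (auto simp: eventually_sequentially)
    moreover have "qpoch (complex_of_real y) q N \<noteq> 0"
      using partial_pos[of N] by (simp only: partial of_real_eq_0_iff)
    ultimately show ?thesis
      using qpoch_inf_split[OF assms(1,2), of "complex_of_real y" N] by simp
  qed
  ultimately show ?thesis using complex_eq_iff by fastforce
qed

section \<open>The function x \<mapsto> (b x; q)_\<infinity> 1\<phi>1(a; b x; q, -t x)\<close>

lemma summable_norm_ratio_tendsto_0:
  fixes f :: "nat \<Rightarrow> 'a::real_normed_vector"
  assumes ratio: "\<And>n. norm (f (Suc n)) \<le> r n * norm (f n)" and "r \<longlonglongrightarrow> 0"
  shows "summable (\<lambda>n. norm (f n))"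
proof -
  obtain N where N: "\<And>n. n \<ge> N \<Longrightarrow> r n < 1/2"
    using order_tendstoD(2)[OF \<open>r \<longlonglongrightarrow> 0\<close>, of "1/2"] by (auto simp: eventually_sequentially)
  show ?thesis
  proof (rule summable_ratio_test[of "1/2" N])
    fix n assume "N \<le> n"
    then have "r n \<le> 1/2"
      using N by (auto intro: less_imp_le)
    then have "r n * norm (f n) \<le> 1/2 * norm (f n)"
      by (rule mult_right_mono) simp
    then show "norm (norm (f (Suc n))) \<le> 1/2 * norm (norm (f n))"
      using ratio[of n] by simp
  qed simp
qed

definition phi11_coeff :: "complex \<Rightarrow> complex \<Rightarrow> real \<Rightarrow> nat \<Rightarrow> complex" where
  "phi11_coeff a t q k =
     complex_of_real q ^ (k * (k - 1) div 2) * qpoch a q k / qpoch (complex_of_real q) q k * t ^ k"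

lemma one_minus_power_nonzero:
  assumes "0 < q" "q < 1" "n > 0"
  shows "1 - complex_of_real q ^ n \<noteq> 0"
proof -
  have "q ^ n < 1" using assms by (simp add: power_less_one_iff)
  then show ?thesis by (metis of_real_1 of_real_eq_iff of_real_power eq_iff_diff_eq_0 less_irrefl)
qed

lemma qpoch_q_nonzero:
  assumes "0 < q" "q < 1"
  shows "qpoch (complex_of_real q) q k \<noteq> 0"
  using one_minus_power_nonzero[OF assms, of "Suc j" for j] by (simp add: qpoch_def)

lemma triangular_Suc: "Suc k * (Suc k - 1) div 2 = k * (k - 1) div 2 + k"
proof -
  have "Suc k * (Suc k - 1) = k * (k - 1) + 2 * k" by (cases k) (auto simp: algebra_simps)
  then show ?thesis by simp
qed

lemma phi11_coeff_0 [simp]: "phi11_coeff a t q 0 = 1"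
  by (simp add: phi11_coeff_def qpoch_def)

lemma phi11_coeff_Suc:
  assumes "0 < q" "q < 1"
  shows "phi11_coeff a t q (Suc k) = phi11_coeff a t q k * complex_of_real q ^ k
           * (1 - a * complex_of_real q ^ k) / (1 - complex_of_real q ^ Suc k) * t"
  unfolding phi11_coeff_def triangular_Suc qpoch_Suc_last
  using qpoch_q_nonzero[OF assms] one_minus_power_nonzero[OF assms, of "Suc k"]
  by (simp add: power_add field_simps)

lemma norm_phi11_coeff_Suc_le:
  assumes "0 < q" "q < 1"
  shows "norm (phi11_coeff a t q (Suc k))
           \<le> q ^ k * ((1 + norm a) * norm t / (1 - q)) * norm (phi11_coeff a t q k)"
proof -
  have "norm (1 - a * complex_of_real q ^ k) \<le> 1 + norm a * q ^ k"
    using norm_triangle_ineq4[of 1 "a * complex_of_real q ^ k"] assms by (simp add: norm_mult norm_power)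
  also have "\<dots> \<le> 1 + norm a"
    using assms by (simp add: mult_left_le power_le_one)
  finally have num: "norm (1 - a * complex_of_real q ^ k) \<le> 1 + norm a" .
  have "1 - complex_of_real q ^ Suc k = complex_of_real (1 - q ^ Suc k)"
    by simp
  moreover have "q ^ Suc k \<le> q"
    using assms by (simp add: mult_left_le power_le_one)
  ultimately have den: "1 - q \<le> norm (1 - complex_of_real q ^ Suc k)"
    using assms by (simp only: norm_of_real)
  have "norm (phi11_coeff a t q (Suc k)) = norm (phi11_coeff a t q k) * q ^ k
          * norm (1 - a * complex_of_real q ^ k) / norm (1 - complex_of_real q ^ Suc k) * norm t"
    using assms by (simp add: phi11_coeff_Suc[OF assms] norm_mult norm_divide norm_power)
  also have "\<dots> \<le> norm (phi11_coeff a t q k) * q ^ k * (1 + norm a) / (1 - q) * norm t"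
    using num den assms by (intro mult_right_mono frac_le mult_left_mono) auto
  finally show ?thesis by (simp add: field_simps)
qed

lemma summable_phi11_coeff:
  assumes "0 < q" "q < 1" "0 \<le> R"
  shows "summable (\<lambda>k. norm (phi11_coeff a t q k) * R ^ k)"
proof -
  let ?C = "(1 + norm a) * norm t / (1 - q) * R"
  have "summable (\<lambda>k. norm (phi11_coeff a t q k * of_real R ^ k))"
  proof (rule summable_norm_ratio_tendsto_0)
    show "norm (phi11_coeff a t q (Suc k) * of_real R ^ Suc k)
            \<le> q ^ k * ?C * norm (phi11_coeff a t q k * of_real R ^ k)" for k
      using mult_right_mono[OF norm_phi11_coeff_Suc_le[OF assms(1,2), of a t k], of "R ^ Suc k"] assms
      by (simp add: norm_mult norm_power mult_ac)
    show "(\<lambda>k. q ^ k * ?C) \<longlonglongrightarrow> 0"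
      using assms by (intro tendsto_mult_left_zero LIMSEQ_power_zero) auto
  qed
  then show ?thesis using assms by (simp add: norm_mult norm_power)
qed

lemma summable_phi11_coeff_bounded:
  assumes "0 < q" "q < 1" "\<And>k. norm (p k) \<le> E"
  shows "summable (\<lambda>k. phi11_coeff a t q k * y ^ k * p k)"
proof (rule summable_comparison_test')
  show "summable (\<lambda>k. norm (phi11_coeff a t q k) * norm y ^ k * E)"
    using summable_phi11_coeff[OF assms(1,2), of "norm y"] by (intro summable_mult2) auto
  show "norm (phi11_coeff a t q k * y ^ k * p k) \<le> norm (phi11_coeff a t q k) * norm y ^ k * E" for k
    using assms(3)[of k] by (simp add: norm_mult norm_power mult_left_mono)
qed

definition phi11_scaled :: "complex \<Rightarrow> complex \<Rightarrow> complex \<Rightarrow> real \<Rightarrow> complex \<Rightarrow> complex" where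
  "phi11_scaled a b t q x = qpoch_phi11 a (b * x) q (- (t * x))"

lemma phi11_scaled_series:
  "phi11_scaled a b t q x =
     (\<Sum>k. phi11_coeff a t q k * x ^ k * qpoch_inf (b * x * complex_of_real q ^ k) q)"
proof -
  have "(-1) ^ k * complex_of_real q ^ (k * (k - 1) div 2) * qpoch a q k
          * qpoch_inf (b * x * complex_of_real q ^ k) q / qpoch (complex_of_real q) q k * (- (t * x)) ^ k
        = ((-1) ^ k * (-1) ^ k) * (phi11_coeff a t q k * x ^ k * qpoch_inf (b * x * complex_of_real q ^ k) q)"
    for k
    unfolding phi11_coeff_def power_minus[of "t * x"] power_mult_distrib
    by (simp only: divide_inverse mult_ac)
  moreover have "(-1::complex) ^ k * (-1) ^ k = 1" for k
    by (simp flip: power_mult_distrib)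
  ultimately show ?thesis
    unfolding phi11_scaled_def qpoch_phi11_def by simp
qed

lemma phi11_scaled_power_sums:
  assumes q: "0 < q" "q < 1"
  shows "(\<lambda>k. phi11_coeff a t q k * (complex_of_real q ^ n * x) ^ k
            * qpoch_inf (b * x * complex_of_real q ^ (k + n)) q)
           sums phi11_scaled a b t q (complex_of_real q ^ n * x)"
proof -
  have bound: "norm (qpoch_inf (b * x * complex_of_real q ^ j) q) \<le> exp (norm b * norm x / (1 - q))" for j
    using q by (intro norm_qpoch_inf_le) (simp_all add: norm_mult norm_power mult_left_le power_le_one)
  have "b * (complex_of_real q ^ n * x) * complex_of_real q ^ k = b * x * complex_of_real q ^ (k + n)" for k
    by (simp add: power_add mult_ac)
  then show ?thesis
    unfolding phi11_scaled_series
    by (simp only:) (rule summable_sums summable_phi11_coeff_bounded[OF q] bound)+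
qed

lemma phi11_scaled_contiguous:
  assumes q: "0 < q" "q < 1" and zb: "z * b = 1 + z * t"
  shows "z * phi11_scaled a b t q x + (x - z) * phi11_scaled a b t q (complex_of_real q * x)
         + z * t * x * (a - b * complex_of_real q * x)
           * phi11_scaled a b t q (complex_of_real q * complex_of_real q * x) = 0"
proof -
  define Q where "Q = complex_of_real q"
  define s where "s = z * t"
  define d where "d = phi11_coeff a t q"
  define P where "P k = qpoch_inf (b * x * Q ^ k) q" for k
  have P_Suc: "P k = (1 - b * x * Q ^ k) * P (Suc k)" for k
    unfolding P_def using qpoch_inf_Suc[OF q, of "b * x * Q ^ k"] by (simp add: Q_def mult_ac)
  have series: "(\<lambda>k. d k * (Q ^ n * x) ^ k * P (k + n)) sums phi11_scaled a b t q (Q ^ n * x)" for n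
    unfolding d_def P_def Q_def by (rule phi11_scaled_power_sums[OF q])
  define T where "T k = z * (d k * x ^ k * P k) + (x - z) * (d k * (Q * x) ^ k * P (Suc k))
      + s * x * (a - b * Q * x) * (d k * (Q * Q * x) ^ k * P (Suc (Suc k)))" for k
  have T_sums: "T sums (z * phi11_scaled a b t q x + (x - z) * phi11_scaled a b t q (Q * x)
      + s * x * (a - b * Q * x) * phi11_scaled a b t q (Q * Q * x))"
    using series[of 0] series[of 1] series[of 2] unfolding T_def
    by (intro sums_add sums_mult) (simp_all add: power2_eq_square)
  \<comment> \<open>termwise, the relation is a telescoping difference\<close>
  define G where "G k = z * (1 - Q ^ k) * d k * x ^ k * P (Suc k)" for k
  have G_Suc: "G (Suc k) = s * Q ^ k * (1 - a * Q ^ k) * d k * x ^ Suc k * P (Suc (Suc k))" for k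
  proof -
    have "z * (1 - Q ^ Suc k) * d (Suc k) = s * Q ^ k * (1 - a * Q ^ k) * d k"
      unfolding d_def phi11_coeff_Suc[OF q] Q_def s_def
      using one_minus_power_nonzero[OF q, of "Suc k"] by (simp add: field_simps)
    then show ?thesis
      unfolding G_def by (metis mult.assoc)
  qed
  have T_telescope: "T k = G k - G (Suc k)" for k
  proof -
    have s: "s = z * b - 1"
      using zb unfolding s_def by simp
    have P_k: "P k = (1 - b * x * Q ^ k) * ((1 - b * x * Q ^ Suc k) * P (Suc (Suc k)))"
      using P_Suc[of k] P_Suc[of "Suc k"] by simp
    show ?thesis
      unfolding T_def G_Suc G_def[of k] P_k P_Suc[of "Suc k"] s
      by (simp add: power_mult_distrib algebra_simps)
  qed
  have "G \<longlonglongrightarrow> 0"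
  proof -
    define E where "E = exp (norm b * norm x / (1 - q))"
    have "norm (z * (1 - Q ^ k) * P (Suc k)) \<le> norm z * 2 * E" for k
    proof -
      have "norm (1 - Q ^ k) \<le> 1 + q ^ k"
        using norm_triangle_ineq4[of 1 "Q ^ k"] q by (simp add: Q_def norm_power)
      moreover have "q ^ k \<le> 1"
        using q by (simp add: power_le_one)
      ultimately have "norm (1 - Q ^ k) \<le> 2"
        by linarith
      moreover have "norm (P j) \<le> E" for j
        unfolding P_def E_def Q_def using q
        by (intro norm_qpoch_inf_le) (simp_all add: norm_mult norm_power mult_left_le power_le_one)
      ultimately show ?thesis
        using norm_ge_zero[of z] by (simp add: norm_mult mult_mono mult.assoc)
    qed
    then have "(\<lambda>k. d k * x ^ k * (z * (1 - Q ^ k) * P (Suc k))) \<longlonglongrightarrow> 0"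
      unfolding d_def by (intro summable_LIMSEQ_zero summable_phi11_coeff_bounded[OF q])
    then show ?thesis
      unfolding G_def by (simp add: ac_simps)
  qed
  then have "(\<lambda>k. G k - G (Suc k)) sums (G 0 - 0)"
    by (rule telescope_sums')
  then have "T sums 0"
    unfolding T_telescope[symmetric] by (simp add: G_def)
  with T_sums show ?thesis
    unfolding Q_def s_def using sums_unique2 by blast
qed

lemma phi11_scaled_tendsto_1:
  assumes q: "0 < q" "q < 1" and f: "(f \<longlongrightarrow> 0) F" and "F \<noteq> bot"
  shows "((\<lambda>y. phi11_scaled a b t q (f y)) \<longlongrightarrow> 1) F"
proof -
  define E where "E = exp (norm b / (1 - q))"
  define g where "g k y = phi11_coeff a t q k * f y ^ k * qpoch_inf (b * f y * complex_of_real q ^ k) q"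
    for k y
  have "eventually (\<lambda>y. norm (f y) < 1) F"
    using order_tendstoD(2)[OF tendsto_norm_zero[OF f], of 1] by simp
  then have uniform: "eventually (\<lambda>y. \<forall>k. norm (g k y) \<le> norm (phi11_coeff a t q k) * E) F"
  proof eventually_elim
    case (elim y)
    show ?case
    proof
      fix k
      have "norm (f y) * q ^ k \<le> 1"
        using elim q by (intro mult_le_one power_le_one) auto
      then have "norm (b * f y * complex_of_real q ^ k) \<le> norm b"
        using mult_left_le[of _ "norm b"] q by (simp add: norm_mult norm_power mult.assoc)
      then have "norm (f y) ^ k * norm (qpoch_inf (b * f y * complex_of_real q ^ k) q) \<le> 1 * E"
        unfolding E_def using elim q
        by (intro mult_mono norm_qpoch_inf_le power_le_one) auto
      then show "norm (g k y) \<le> norm (phi11_coeff a t q k) * E"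
        unfolding g_def by (simp add: norm_mult norm_power mult_left_mono mult.assoc)
    qed
  qed
  have bound: "eventually (\<lambda>(k, y). norm (g k y) \<le> norm (phi11_coeff a t q k) * E) (at_top \<times>\<^sub>F F)"
    using eventually_prodI[OF eventually_True[where F = sequentially] uniform]
    by (rule eventually_mono) auto
  have lim: "((\<lambda>y. g k y) \<longlongrightarrow> phi11_coeff a t q k * 0 ^ k * 1) F" for k
    unfolding g_def using q f
    by (intro tendsto_intros qpoch_inf_tendsto_1 tendsto_mult_left_zero tendsto_mult_right_zero)
  have "summable (\<lambda>k. norm (phi11_coeff a t q k) * E)"
    using summable_phi11_coeff[OF q zero_le_one, of a t] by (simp add: summable_mult2)
  from tannerys_theorem[OF lim bound this \<open>F \<noteq> bot\<close>] show ?thesis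
    by (simp add: phi11_scaled_series g_def)
qed

section \<open>Wronskians of the Jacobi recurrence\<close>

lemma in_l2_tendsto_0:
  assumes "in_l2 x"
  shows "(\<lambda>n. x (Suc n)) \<longlonglongrightarrow> 0"
proof -
  have "(\<lambda>n. (norm (x (Suc n)))\<^sup>2) \<longlonglongrightarrow> 0"
    using assms unfolding in_l2_def by (rule summable_LIMSEQ_zero)
  from tendsto_real_sqrt[OF this] show ?thesis
    by (simp add: tendsto_norm_zero_iff)
qed

definition jac_wronskian :: "real \<Rightarrow> real \<Rightarrow> real \<Rightarrow> (nat \<Rightarrow> complex) \<Rightarrow> (nat \<Rightarrow> complex) \<Rightarrow> nat \<Rightarrow> complex"
  where "jac_wronskian q \<sigma> \<gamma> x y m = complex_of_real (jac_off q \<sigma> \<gamma> m) * (x m * y (Suc m) - x (Suc m) * y m)"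

lemma jac_wronskian_Suc:
  assumes "m \<ge> 1"
    and "jac_apply q \<sigma> \<gamma> x (Suc m) = z * x (Suc m)" "jac_apply q \<sigma> \<gamma> y (Suc m) = z * y (Suc m)"
  shows "jac_wronskian q \<sigma> \<gamma> x y (Suc m) = jac_wronskian q \<sigma> \<gamma> x y m"
proof -
  let ?w = "\<lambda>n. complex_of_real (jac_off q \<sigma> \<gamma> n)" and ?d = "complex_of_real (jac_diag q (Suc m))"
  have "?w (Suc m) * x (Suc (Suc m)) = (z - ?d) * x (Suc m) - ?w m * x m"
    "?w (Suc m) * y (Suc (Suc m)) = (z - ?d) * y (Suc m) - ?w m * y m"
    using assms unfolding jac_apply_def by (simp_all add: algebra_simps)
  then show ?thesis
    unfolding jac_wronskian_def by algebra
qed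

lemma jac_wronskian_constant:
  assumes "\<And>n. n \<ge> 2 \<Longrightarrow> jac_apply q \<sigma> \<gamma> x n = z * x n"
    and "\<And>n. n \<ge> 2 \<Longrightarrow> jac_apply q \<sigma> \<gamma> y n = z * y n"
  shows "jac_wronskian q \<sigma> \<gamma> x y (Suc k) = jac_wronskian q \<sigma> \<gamma> x y 1"
proof (induction k)
  case (Suc k)
  then show ?case
    using jac_wronskian_Suc[of "Suc k" q \<sigma> \<gamma> x z y] assms[of "Suc (Suc k)"] by simp
qed simp

section \<open>The eigenvalue problem\<close>

locale jacobi_eigenproblem =
  fixes q \<sigma> \<gamma> :: real and z :: complex
  assumes q_pos: "0 < q" and q_less_1: "q < 1" and \<sigma>_nonzero: "\<sigma> \<noteq> 0"
    and \<gamma>_gt: "\<gamma> > -1" and z_nonzero: "z \<noteq> 0"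
begin

abbreviation "w \<equiv> jac_off q \<sigma> \<gamma>"

abbreviation "v \<equiv> eigvec q \<sigma> \<gamma> z"

definition "\<alpha> = complex_of_real (q powr (- \<gamma>) * (cosh (\<sigma>/2))\<^sup>2) / z"
definition "\<beta> = complex_of_real ((cosh (\<sigma>/2))\<^sup>2) / z"
definition "\<tau> = complex_of_real ((sinh (\<sigma>/2))\<^sup>2) / z"

definition "\<phi> n = phi11_scaled \<alpha> \<beta> \<tau> q (complex_of_real q ^ n)"

definition "qpoch_\<gamma> n = Re (qpoch_inf (complex_of_real (q powr (\<gamma> + real n))) q)"

definition "\<kappa> n = complex_of_real (q powr (- \<gamma> * real n / 2 + real n * (real n - 3) / 4))
    * complex_of_real (sinh \<sigma> ^ n) * inverse (2 * z) ^ n / complex_of_real (sqrt (qpoch_\<gamma> n))"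

lemma eigvec_eq: "v n = \<kappa> n * \<phi> n"
proof -
  have "\<beta> * complex_of_real q ^ n = complex_of_real (q ^ n * (cosh (\<sigma>/2))\<^sup>2) / z"
    "- (\<tau> * complex_of_real q ^ n) = - complex_of_real (q ^ n * (sinh (\<sigma>/2))\<^sup>2) / z"
    by (simp_all add: \<beta>_def \<tau>_def)
  then show ?thesis
    unfolding eigvec_def \<kappa>_def qpoch_\<gamma>_def \<phi>_def phi11_scaled_def \<alpha>_def by simp
qed

lemma qpoch_phi11_eq_\<phi>_0:
  "qpoch_phi11 (complex_of_real (q powr (- \<gamma>) * (cosh (\<sigma>/2))\<^sup>2) / z)
     (complex_of_real ((cosh (\<sigma>/2))\<^sup>2) / z) q (- complex_of_real ((sinh (\<sigma>/2))\<^sup>2) / z) = \<phi> 0"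
  by (simp add: \<phi>_def phi11_scaled_def \<alpha>_def \<beta>_def \<tau>_def)

lemma powr_Suc_\<gamma>_less_1: "q powr (real (Suc n) + \<gamma>) < 1"
  using powr01_less_one[OF q_pos q_less_1] \<gamma>_gt by simp

lemma qpoch_\<gamma>_pos: "n \<ge> 1 \<Longrightarrow> qpoch_\<gamma> n > 0"
  using powr_Suc_\<gamma>_less_1[of "n - 1"] q_pos q_less_1
  by (auto simp: qpoch_\<gamma>_def add.commute intro!: qpoch_inf_of_real_pos)

lemma qpoch_\<gamma>_Suc: "qpoch_\<gamma> n = (1 - q powr (real n + \<gamma>)) * qpoch_\<gamma> (Suc n)"
proof -
  have "complex_of_real (q powr (\<gamma> + real n)) * complex_of_real q
      = complex_of_real (q powr (\<gamma> + real (Suc n)))"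
    using q_pos by (simp add: powr_add)
  then show ?thesis
    unfolding qpoch_\<gamma>_def using qpoch_inf_Suc[OF q_pos q_less_1, of "complex_of_real (q powr (\<gamma> + real n))"]
    by (simp add: add.commute)
qed

lemma jac_off_nonzero: "n \<ge> 1 \<Longrightarrow> w n \<noteq> 0"
  using powr_Suc_\<gamma>_less_1[of "n - 1"] q_pos \<sigma>_nonzero by (simp add: jac_off_def)

lemma \<kappa>_Suc:
  assumes "n \<ge> 1"
  shows "\<kappa> (Suc n) = \<kappa> n * complex_of_real (w n) / z"
proof -
  let ?D = "1 - q powr (real n + \<gamma>)"
  have D_pos: "?D > 0"
    using powr_Suc_\<gamma>_less_1[of "n - 1"] assms by simp
  have sqrt_split: "sqrt (qpoch_\<gamma> n) = sqrt ?D * sqrt (qpoch_\<gamma> (Suc n))"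
    by (subst qpoch_\<gamma>_Suc) (simp add: real_sqrt_mult)
  have "- \<gamma> * real (Suc n) / 2 + real (Suc n) * (real (Suc n) - 3) / 4
      = (- \<gamma> * real n / 2 + real n * (real n - 3) / 4) + (real n - \<gamma> - 1) / 2"
    by (simp add: field_simps)
  then have "q powr (- \<gamma> * real (Suc n) / 2 + real (Suc n) * (real (Suc n) - 3) / 4)
      = q powr (- \<gamma> * real n / 2 + real n * (real n - 3) / 4) * q powr ((real n - \<gamma> - 1) / 2)"
    by (simp add: powr_add)
  then show ?thesis
    unfolding \<kappa>_def jac_off_def sqrt_split
    using D_pos qpoch_\<gamma>_pos[of "Suc n"] z_nonzero by (simp add: field_simps)
qed

lemma \<kappa>_nonzero: "n \<ge> 1 \<Longrightarrow> \<kappa> n \<noteq> 0"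
  using qpoch_\<gamma>_pos[of n] q_pos \<sigma>_nonzero z_nonzero by (simp add: \<kappa>_def)

lemma jac_off_Suc_sq:
  "(w (Suc m))\<^sup>2 = (sinh (\<sigma>/2))\<^sup>2 * (cosh (\<sigma>/2))\<^sup>2 * q ^ m * (q powr (- \<gamma>) - q * q ^ m)"
proof -
  have D: "(sqrt (1 - q powr (real (Suc m) + \<gamma>)))\<^sup>2 = 1 - q powr (real (Suc m) + \<gamma>)"
    using powr_Suc_\<gamma>_less_1[of m] by simp
  have "(real (Suc m) - \<gamma> - 1) / 2 + (real (Suc m) - \<gamma> - 1) / 2 = real m + - \<gamma>"
    by simp
  then have "(q powr ((real (Suc m) - \<gamma> - 1) / 2))\<^sup>2 = q powr (real m + - \<gamma>)"
    by (simp only: power2_eq_square powr_add[symmetric])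
  also have "\<dots> = q ^ m * q powr (- \<gamma>)"
    by (simp only: powr_add powr_realpow[OF q_pos])
  finally have P: "(q powr ((real (Suc m) - \<gamma> - 1) / 2))\<^sup>2 = q ^ m * q powr (- \<gamma>)" .
  have "q powr (- \<gamma>) * q powr (real (Suc m) + \<gamma>) = q powr real (Suc m)"
    by (simp only: powr_add[symmetric]) simp
  also have "\<dots> = q * q ^ m"
    by (simp only: powr_realpow[OF q_pos] power_Suc)
  finally have Q: "q powr (- \<gamma>) * q powr (real (Suc m) + \<gamma>) = q * q ^ m" .
  have S: "(sinh \<sigma>)\<^sup>2 = 4 * (sinh (\<sigma>/2))\<^sup>2 * (cosh (\<sigma>/2))\<^sup>2"
    using sinh_double[of "\<sigma>/2"] by (simp add: power2_eq_square)
  have "(w (Suc m))\<^sup>2 = (sinh (\<sigma>/2))\<^sup>2 * (cosh (\<sigma>/2))\<^sup>2 * q ^ m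
      * (q powr (- \<gamma>) * (1 - q powr (real (Suc m) + \<gamma>)))"
    unfolding jac_off_def power_mult_distrib D P S by (simp add: power_divide mult_ac)
  also have "q powr (- \<gamma>) * (1 - q powr (real (Suc m) + \<gamma>)) = q powr (- \<gamma>) - q * q ^ m"
    using Q by (simp add: right_diff_distrib)
  finally show ?thesis .
qed

lemma \<phi>_three_term:
  "z * \<phi> m + (complex_of_real q ^ m - z) * \<phi> (Suc m)
     + complex_of_real ((w (Suc m))\<^sup>2) / z * \<phi> (Suc (Suc m)) = 0"
proof -
  have "z * \<beta> = 1 + z * \<tau>"
    using z_nonzero by (simp add: \<beta>_def \<tau>_def cosh_square_eq)
  from phi11_scaled_contiguous[OF q_pos q_less_1 this, of \<alpha> "complex_of_real q ^ m"]
  have "z * \<phi> m + (complex_of_real q ^ m - z) * \<phi> (Suc m)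
      + z * \<tau> * complex_of_real q ^ m * (\<alpha> - \<beta> * complex_of_real q * complex_of_real q ^ m)
        * \<phi> (Suc (Suc m)) = 0"
    by (simp add: \<phi>_def mult.assoc)
  moreover have "z * \<tau> * complex_of_real q ^ m * (\<alpha> - \<beta> * complex_of_real q * complex_of_real q ^ m)
      = complex_of_real ((w (Suc m))\<^sup>2) / z"
    unfolding jac_off_Suc_sq \<alpha>_def \<beta>_def \<tau>_def using z_nonzero by (simp add: field_simps)
  ultimately show ?thesis by simp
qed

lemma eigvec_row:
  assumes "n \<ge> 2"
  shows "jac_apply q \<sigma> \<gamma> v n = z * v n"
proof -
  obtain m where n: "n = Suc m" and m: "m \<ge> 1"
    using assms by (cases n) auto
  let ?c = "\<kappa> m * complex_of_real (w m) / z"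
  have v1: "v (Suc m) = ?c * \<phi> (Suc m)"
    and v2: "v (Suc (Suc m)) = ?c * (complex_of_real (w (Suc m)) / z) * \<phi> (Suc (Suc m))"
    using \<kappa>_Suc[of m] \<kappa>_Suc[of "Suc m"] m by (simp_all add: eigvec_eq)
  have "jac_apply q \<sigma> \<gamma> v (Suc m) = complex_of_real (w m) * v m
      + complex_of_real q ^ m * v (Suc m) + complex_of_real (w (Suc m)) * v (Suc (Suc m))"
    using m by (simp add: jac_apply_def jac_diag_def)
  also have "\<dots> = ?c * (z * \<phi> m + complex_of_real q ^ m * \<phi> (Suc m)
      + complex_of_real ((w (Suc m))\<^sup>2) / z * \<phi> (Suc (Suc m)))"
    unfolding v1 v2 eigvec_eq[of m] using z_nonzero by (simp add: field_simps power2_eq_square)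
  also have "\<dots> = ?c * (z * \<phi> (Suc m))"
    using \<phi>_three_term[of m] by (simp add: algebra_simps)
  finally show ?thesis
    unfolding n v1 by simp
qed

lemma eigvec_row_1_iff: "jac_apply q \<sigma> \<gamma> v 1 = z * v 1 \<longleftrightarrow> \<phi> 0 = 0"
proof -
  let ?X = "complex_of_real ((w 1)\<^sup>2) / z"
  have v2: "v 2 = \<kappa> 1 * (complex_of_real (w 1) / z) * \<phi> 2"
    using \<kappa>_Suc[of 1] by (simp add: eigvec_eq numeral_2_eq_2)
  have "jac_apply q \<sigma> \<gamma> v 1 - z * v 1 = \<kappa> 1 * ((1 - z) * \<phi> 1 + ?X * \<phi> 2)"
    unfolding jac_apply_def jac_diag_def v2 eigvec_eq[of 1]
    using z_nonzero by (simp add: field_simps power2_eq_square)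
  also have "(1 - z) * \<phi> 1 + ?X * \<phi> 2 = (z * \<phi> 0 + (1 - z) * \<phi> 1 + ?X * \<phi> 2) - z * \<phi> 0"
    by simp
  also have "\<dots> = - z * \<phi> 0"
    using \<phi>_three_term[of 0] by (simp add: numeral_2_eq_2)
  finally have row_defect: "jac_apply q \<sigma> \<gamma> v 1 - z * v 1 = \<kappa> 1 * (- z * \<phi> 0)" .
  have "jac_apply q \<sigma> \<gamma> v 1 = z * v 1 \<longleftrightarrow> jac_apply q \<sigma> \<gamma> v 1 - z * v 1 = 0"
    by simp
  also have "\<dots> \<longleftrightarrow> \<phi> 0 = 0"
    unfolding row_defect using \<kappa>_nonzero[of 1] z_nonzero by simp
  finally show ?thesis .
qed

lemma jac_off_tendsto_0: "w \<longlonglongrightarrow> 0"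
proof (rule Lim_null_comparison)
  show "eventually (\<lambda>n. norm (w n) \<le> \<bar>sinh \<sigma>\<bar> * q powr ((real n - \<gamma> - 1) / 2)) sequentially"
  proof (rule eventually_sequentiallyI[of 1])
    fix n :: nat
    assume "n \<ge> 1"
    then have "sqrt (1 - q powr (real n + \<gamma>)) \<le> 1"
      using powr_Suc_\<gamma>_less_1[of "n - 1"] by simp
    then have "1/2 * sqrt (1 - q powr (real n + \<gamma>)) \<le> 1"
      by linarith
    from mult_left_mono[OF this, of "\<bar>sinh \<sigma>\<bar> * q powr ((real n - \<gamma> - 1) / 2)"]
    show "norm (w n) \<le> \<bar>sinh \<sigma>\<bar> * q powr ((real n - \<gamma> - 1) / 2)"
      using powr_Suc_\<gamma>_less_1[of "n - 1"] \<open>n \<ge> 1\<close>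
      by (simp add: jac_off_def abs_mult mult_ac)
  qed
  show "(\<lambda>n. \<bar>sinh \<sigma>\<bar> * q powr ((real n - \<gamma> - 1) / 2)) \<longlonglongrightarrow> 0"
    using q_pos q_less_1 by real_asymp
qed

lemma \<phi>_tendsto_1: "\<phi> \<longlonglongrightarrow> 1"
  unfolding \<phi>_def using q_pos q_less_1
  by (intro phi11_scaled_tendsto_1 LIMSEQ_power_zero) simp_all

lemma eigvec_in_l2: "in_l2 v"
proof -
  obtain B where B: "\<And>n. norm (\<phi> n) \<le> B"
    using convergent_imp_Bseq[OF convergentI[OF \<phi>_tendsto_1]] by (auto simp: Bseq_def)
  have "summable (\<lambda>n. norm ((\<kappa> (Suc n))\<^sup>2))"
  proof (rule summable_norm_ratio_tendsto_0)
    show "norm ((\<kappa> (Suc (Suc n)))\<^sup>2) \<le> (w (Suc n) / norm z)\<^sup>2 * norm ((\<kappa> (Suc n))\<^sup>2)" for n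
      using \<kappa>_Suc[of "Suc n"] by (simp add: norm_mult norm_divide norm_power power_mult_distrib power_divide mult.commute)
    show "(\<lambda>n. (w (Suc n) / norm z)\<^sup>2) \<longlonglongrightarrow> 0"
      using tendsto_power[OF tendsto_divide_zero[OF LIMSEQ_Suc[OF jac_off_tendsto_0]], of "norm z" 2]
      by simp
  qed
  then have "summable (\<lambda>n. B\<^sup>2 * norm ((\<kappa> (Suc n))\<^sup>2))"
    by (rule summable_mult)
  then show ?thesis
    unfolding in_l2_def
  proof (rule summable_comparison_test')
    fix n
    have "(norm (\<phi> (Suc n)))\<^sup>2 \<le> B\<^sup>2"
      using B[of "Suc n"] by (intro power_mono) auto
    then have "(norm (\<kappa> (Suc n)))\<^sup>2 * (norm (\<phi> (Suc n)))\<^sup>2 \<le> (norm (\<kappa> (Suc n)))\<^sup>2 * B\<^sup>2"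
      by (rule mult_left_mono) simp
    moreover have "(norm (v (Suc n)))\<^sup>2 = (norm (\<kappa> (Suc n)))\<^sup>2 * (norm (\<phi> (Suc n)))\<^sup>2"
      by (simp add: eigvec_eq norm_mult power_mult_distrib)
    ultimately show "norm ((norm (v (Suc n)))\<^sup>2) \<le> B\<^sup>2 * norm ((\<kappa> (Suc n))\<^sup>2)"
      by (simp add: norm_power mult.commute)
  qed
qed

lemma eigvec_nonzero: "\<exists>n\<ge>1. v n \<noteq> 0"
proof -
  have "eventually (\<lambda>n. n \<ge> 1 \<and> \<phi> n \<noteq> 0) sequentially"
    using eventually_ge_at_top tendsto_imp_eventually_ne[OF \<phi>_tendsto_1]
    by (rule eventually_conj) simp
  then obtain n where "n \<ge> 1" "\<phi> n \<noteq> 0"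
    by (auto simp: eventually_sequentially)
  then show ?thesis
    using \<kappa>_nonzero by (auto simp: eigvec_eq)
qed

lemma eigvec_is_eigenvector:
  assumes "\<phi> 0 = 0"
  shows "is_eigenvector q \<sigma> \<gamma> z v"
proof -
  have "jac_apply q \<sigma> \<gamma> v n = z * v n" if "n \<ge> 1" for n
  proof (cases "n = 1")
    case True
    then show ?thesis
      using eigvec_row_1_iff assms by simp
  next
    case False
    with that show ?thesis
      by (intro eigvec_row) simp
  qed
  with eigvec_in_l2 eigvec_nonzero show ?thesis
    unfolding is_eigenvector_def by blast
qed

lemma eigenvector_first_nonzero:
  assumes "is_eigenvector q \<sigma> \<gamma> z x"
  shows "x 1 \<noteq> 0"
proof
  assume x1: "x 1 = 0"
  have row: "jac_apply q \<sigma> \<gamma> x n = z * x n" if "n \<ge> 1" for n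
    using assms that unfolding is_eigenvector_def by blast
  have "x (Suc k) = 0 \<and> x (Suc (Suc k)) = 0" for k
  proof (induction k)
    case 0
    have "x 1 + complex_of_real (w 1) * x 2 = z * x 1"
      using row[of 1] by (simp add: jac_apply_def jac_diag_def)
    then show ?case
      using x1 jac_off_nonzero[of 1] by (simp add: numeral_2_eq_2)
  next
    case (Suc k)
    then have "complex_of_real (w (Suc (Suc k))) * x (Suc (Suc (Suc k))) = 0"
      using row[of "Suc (Suc k)"] by (simp add: jac_apply_def)
    then show ?case
      using Suc jac_off_nonzero[of "Suc (Suc k)"] by simp
  qed
  then have "\<forall>n\<ge>1. x n = 0"
    by (metis Suc_le_D One_nat_def)
  then show False
    using assms unfolding is_eigenvector_def by blast
qed

lemma eigenvalue_imp_\<phi>_0: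
  assumes "is_eigenvalue q \<sigma> \<gamma> z"
  shows "\<phi> 0 = 0"
proof -
  obtain x where x: "is_eigenvector q \<sigma> \<gamma> z x"
    using assms unfolding is_eigenvalue_def by blast
  then have x_l2: "in_l2 x" and x_row: "\<And>n. n \<ge> 1 \<Longrightarrow> jac_apply q \<sigma> \<gamma> x n = z * x n"
    unfolding is_eigenvector_def by auto
  let ?W = "jac_wronskian q \<sigma> \<gamma> x v"
  have "?W (Suc k) = ?W 1" for k
    using x_row eigvec_row by (intro jac_wronskian_constant) auto
  then have "(\<lambda>k. ?W (Suc k)) = (\<lambda>k. ?W 1)"
    by (intro ext)
  moreover have "(\<lambda>k. ?W (Suc k)) \<longlonglongrightarrow> 0"
  proof -
    note x0 = in_l2_tendsto_0[OF x_l2] and v0 = in_l2_tendsto_0[OF eigvec_in_l2]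
    have "(\<lambda>k. complex_of_real (w (Suc k)) * (x (Suc k) * v (Suc (Suc k)) - x (Suc (Suc k)) * v (Suc k)))
        \<longlonglongrightarrow> complex_of_real 0 * (0 * 0 - 0 * 0)"
      by (intro tendsto_intros LIMSEQ_Suc x0 v0 jac_off_tendsto_0)
    then show ?thesis
      by (simp add: jac_wronskian_def)
  qed
  ultimately have "?W 1 = 0"
    by (simp add: LIMSEQ_const_iff)
  then have cross: "x 1 * v 2 = x 2 * v 1"
    using jac_off_nonzero[of 1] by (simp add: jac_wronskian_def numeral_2_eq_2)
  have x_row_1: "x 1 + complex_of_real (w 1) * x 2 = z * x 1"
    using x_row[of 1] by (simp add: jac_apply_def jac_diag_def)
  have "x 1 * (jac_apply q \<sigma> \<gamma> v 1 - z * v 1) = x 1 * (v 1 + complex_of_real (w 1) * v 2 - z * v 1)"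
    by (simp add: jac_apply_def jac_diag_def)
  also have "\<dots> = v 1 * (x 1 + complex_of_real (w 1) * x 2 - z * x 1)"
    using cross by (simp add: algebra_simps)
  also have "\<dots> = 0"
    using x_row_1 by simp
  finally show ?thesis
    using eigenvector_first_nonzero[OF x] eigvec_row_1_iff by simp
qed

end

theorem mainTheorem14:
  fixes q \<sigma> \<gamma> :: real and z :: complex
  assumes "0 < q" "q < 1" "\<sigma> \<noteq> 0" "\<gamma> > -1" "z \<noteq> 0"
  shows "(is_eigenvalue q \<sigma> \<gamma> z \<longleftrightarrow>
           qpoch_phi11 (complex_of_real (q powr (- \<gamma>) * (cosh (\<sigma>/2))\<^sup>2) / z)
                       (complex_of_real ((cosh (\<sigma>/2))\<^sup>2) / z) q
                       (- complex_of_real ((sinh (\<sigma>/2))\<^sup>2) / z) = 0)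
       \<and> (qpoch_phi11 (complex_of_real (q powr (- \<gamma>) * (cosh (\<sigma>/2))\<^sup>2) / z)
                       (complex_of_real ((cosh (\<sigma>/2))\<^sup>2) / z) q
                       (- complex_of_real ((sinh (\<sigma>/2))\<^sup>2) / z) = 0
          \<longrightarrow> is_eigenvector q \<sigma> \<gamma> z (eigvec q \<sigma> \<gamma> z))"
proof -
  interpret jacobi_eigenproblem q \<sigma> \<gamma> z
    using assms by unfold_locales
  show ?thesis
    unfolding qpoch_phi11_eq_\<phi>_0 is_eigenvalue_def
    using eigvec_is_eigenvector eigenvalue_imp_\<phi>_0 unfolding is_eigenvalue_def by blast
qed

end
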